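(* For every $n\ge0$ and $t\in(0,1)$, $$t\frac{d}{dt}\ln h_n(t)=\alpha+\beta+\gamma+2n+1-R_n(t),$$ hence for $n\ge1$, $t\frac{d\beta_n}{dt}=\beta_n(2-R_n+R_{n-1})$, and the function $H_n(t):=t(t-1)\frac{d}{dt}\ln D_n(t)$ satisfies $$H_n(t)=n(n+\alpha+\beta+\gamma)(t-1)-(t-1)\sum_{j=0}^{n-1}R_j(t).$$
   Context: Fix $\alpha,\beta,\gamma>0$ and real constants $A,B$ with $A\ge0$, $A+B\ge0$, not both $A$ and $A+B$ equal to $0$. Let $\theta$ be the Heaviside function ($\theta(x)=1$ for $x>0$, $0$ otherwise). For $t\in(0,1)$ put $w(x,t)=x^{\alpha}(1-x)^{\beta}|x-t|^{\gamma}(A+B\theta(x-t))$ on $[0,1]$. Let $P_n(x,t)$ be the monic orthogonal polynomials w.r.t. $w(\cdot,t)$ on $[0,1]$, $\int_0^1P_mP_nw\,dx=h_n(t)\delta_{mn}$, $\beta_n=h_n/h_{n-1}$. Let $D_n(t)=\det\left(\int_0^1x^{i+j}w(x,t)dx\right)_{i,j=0}^{n-1}=\prod_{j=0}^{n-1}h_j(t)$. Define $R_n(t)=\frac{\beta}{h_n}\int_0^1\frac{P_n^2(y,t)w(y,t)}{1-y}dy$. *)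

theory Defs
  imports "HOL-Analysis.Analysis" "HOL-Computational_Algebra.Polynomial"
begin

definition heaviside :: "real \<Rightarrow> real" where
  "heaviside x = (if x > 0 then 1 else 0)"

definition wt :: "real \<Rightarrow> real \<Rightarrow> real \<Rightarrow> real \<Rightarrow> real \<Rightarrow> real \<Rightarrow> real \<Rightarrow> real" where
  "wt a b g A B t x = x powr a * (1 - x) powr b * \<bar>x - t\<bar> powr g * (A + B * heaviside (x - t))"

definition OP :: "real \<Rightarrow> real \<Rightarrow> real \<Rightarrow> real \<Rightarrow> real \<Rightarrow> nat \<Rightarrow> real \<Rightarrow> real poly" where
  "OP a b g A B n t = (THE p. degree p = n \<and> lead_coeff p = 1 \<and>
      (\<forall>m<n. integral {0..1} (\<lambda>x. poly p x * x ^ m * wt a b g A B t x) = 0))"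

definition hn :: "real \<Rightarrow> real \<Rightarrow> real \<Rightarrow> real \<Rightarrow> real \<Rightarrow> nat \<Rightarrow> real \<Rightarrow> real" where
  "hn a b g A B n t = integral {0..1} (\<lambda>x. (poly (OP a b g A B n t) x)\<^sup>2 * wt a b g A B t x)"

definition betan :: "real \<Rightarrow> real \<Rightarrow> real \<Rightarrow> real \<Rightarrow> real \<Rightarrow> nat \<Rightarrow> real \<Rightarrow> real" where
  "betan a b g A B n t = hn a b g A B n t / hn a b g A B (n - 1) t"

definition moment :: "real \<Rightarrow> real \<Rightarrow> real \<Rightarrow> real \<Rightarrow> real \<Rightarrow> nat \<Rightarrow> real \<Rightarrow> real" where
  "moment a b g A B k t = integral {0..1} (\<lambda>x. x ^ k * wt a b g A B t x)"

definition Dn :: "real \<Rightarrow> real \<Rightarrow> real \<Rightarrow> real \<Rightarrow> real \<Rightarrow> nat \<Rightarrow> real \<Rightarrow> real" where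
  "Dn a b g A B n t = (\<Sum>p | p permutes {..<n}.
      of_int (sign p) * (\<Prod>i<n. moment a b g A B (i + p i) t))"

definition Rn :: "real \<Rightarrow> real \<Rightarrow> real \<Rightarrow> real \<Rightarrow> real \<Rightarrow> nat \<Rightarrow> real \<Rightarrow> real" where
  "Rn a b g A B n t = b / hn a b g A B n t *
      integral {0..1} (\<lambda>y. (poly (OP a b g A B n t) y)\<^sup>2 * wt a b g A B t y / (1 - y))"

end

theory Submission
  imports Defs "Jordan_Normal_Form.Determinant"
begin

text \<open>
  All three formulas follow from one identity,
  \<open>t h\<^sub>n'(t) = (\<alpha> + \<beta> + \<gamma> + 2n + 1) h\<^sub>n(t) - \<beta> \<integral> P\<^sub>n\<^sup>2 w / (1 - y)\<close>,
  since \<open>\<beta>\<^sub>n = h\<^sub>n / h\<^sub>n\<^sub>-\<^sub>1\<close> and \<open>D\<^sub>n = \<Prod>\<^sub>j\<^sub><\<^sub>n h\<^sub>j\<close>.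
  Splitting \<open>[0,1]\<close> at \<open>t\<close> and rescaling each piece to \<open>[0,1]\<close> turns every moment
  \<open>\<mu>\<^sub>k(t) = \<integral> x\<^sup>k w\<close> into a differentiable function with
  \<open>t \<mu>\<^sub>k' = (\<alpha> + \<beta> + \<gamma> + k + 1) \<mu>\<^sub>k - \<beta> \<integral> x\<^sup>k w / (1 - x)\<close>, so
  \<open>t \<partial>\<^sub>t \<integral> p w = (\<alpha> + \<beta> + \<gamma> + 1) \<integral> p w + \<integral> x p' w - \<beta> \<integral> p w / (1 - x)\<close>
  for every fixed polynomial \<open>p\<close>. The Hankel determinant is \<open>\<Prod> h\<^sub>j\<close>, which makes
  \<open>h\<^sub>n = D\<^sub>n\<^sub>+\<^sub>1 / D\<^sub>n\<close> differentiable. Since \<open>P\<^sub>n(\<cdot>, t)\<close> minimises \<open>\<integral> Q\<^sup>2 w(\<cdot>, s)\<close>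
  among monic \<open>Q\<close> of degree \<open>n\<close>, \<open>h\<^sub>n(s) - \<integral> P\<^sub>n(\<cdot>, t)\<^sup>2 w(\<cdot>, s)\<close> has a maximum at
  \<open>s = t\<close>; hence \<open>h\<^sub>n'(t)\<close> is the derivative for the frozen polynomial \<open>P\<^sub>n(\<cdot>, t)\<close>, and
  \<open>\<integral> x (P\<^sub>n\<^sup>2)' w = 2n h\<^sub>n\<close> by orthogonality.
\<close>

section \<open>Beta-type integrals on either side of the singularity\<close>

lemma absolutely_integrable_one_minus_powr:
  fixes e s :: real
  assumes e: "-1 < e" and s: "s \<le> 1"
  shows "(\<lambda>x. (1 - x) powr e) absolutely_integrable_on {s..1}"
proof -
  define F where "F x = - ((1 - x) powr (e + 1) / (e + 1))" for x :: real
  have "continuous_on {s..1} F"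
    unfolding F_def by (intro continuous_on_powr' continuous_intros) (use e in auto)
  moreover have "(F has_vector_derivative (1 - x) powr e) (at x)" if "x \<in> {s<..<1}" for x
  proof -
    have "(F has_real_derivative - ((e + 1) * (1 - x) powr (e + 1 - 1) * (-1) / (e + 1))) (at x)"
      unfolding F_def using that by (auto intro!: derivative_eq_intros)
    then show ?thesis
      using e by (simp add: has_real_derivative_iff_has_vector_derivative)
  qed
  ultimately have "((\<lambda>x. (1 - x) powr e) has_integral (F 1 - F s)) {s..1}"
    by (intro fundamental_theorem_of_calculus_interior_strong[where S="{}"]) (use s in auto)
  then show ?thesis
    by (intro nonnegative_absolutely_integrable_1) auto
qed

lemma integrable_continuous_mult_one_minus_powr:
  fixes e s :: real and h :: "real \<Rightarrow> real"
  assumes "-1 < e" "s \<le> 1" "continuous_on {s..1} h"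
  shows "(\<lambda>x. h x * (1 - x) powr e) integrable_on {s..1}"
proof -
  have "(\<lambda>x. h x * (1 - x) powr e) absolutely_integrable_on {s..1}"
  proof (rule absolutely_integrable_bounded_measurable_product_real)
    show "h \<in> borel_measurable (lebesgue_on {s..1})"
      using assms(3) by (rule continuous_imp_measurable_on_sets_lebesgue) auto
    show "bounded (h ` {s..1})"
      using assms(3) by (intro compact_imp_bounded compact_continuous_image) auto
  qed (use absolutely_integrable_one_minus_powr[OF assms(1,2)] in auto)
  then show ?thesis by (simp add: absolutely_integrable_on_def)
qed

definition beta_left :: "real \<Rightarrow> real \<Rightarrow> real \<Rightarrow> real \<Rightarrow> real" where
  "beta_left c e g s = integral {0..s} (\<lambda>x. x powr c * (1 - x) powr e * (s - x) powr g)"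

definition beta_right :: "real \<Rightarrow> real \<Rightarrow> real \<Rightarrow> real \<Rightarrow> real" where
  "beta_right c e g s = integral {s..1} (\<lambda>x. x powr c * (1 - x) powr e * (x - s) powr g)"

definition beta_left_scaled :: "real \<Rightarrow> real \<Rightarrow> real \<Rightarrow> real \<Rightarrow> real" where
  "beta_left_scaled c e g s = integral {0..1} (\<lambda>u. u powr c * (1 - s * u) powr e * (1 - u) powr g)"

definition beta_right_scaled :: "real \<Rightarrow> real \<Rightarrow> real \<Rightarrow> real \<Rightarrow> real" where
  "beta_right_scaled c e g s =
     integral {0..1} (\<lambda>u. (s + (1 - s) * u) powr c * (1 - u) powr e * u powr g)"

lemma beta_left_integrable:
  fixes c e g s :: real
  assumes "0 < c" "0 < g" "s < 1"
  shows "(\<lambda>x. x powr c * (1 - x) powr e * (s - x) powr g) integrable_on {0..s}"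
  by (intro integrable_continuous_interval continuous_on_powr' continuous_intros) (use assms in auto)

lemma beta_right_integrable:
  fixes c e g s :: real
  assumes "-1 < e" "0 < g" "0 < s"
  shows "(\<lambda>x. x powr c * (1 - x) powr e * (x - s) powr g) integrable_on {s..1}"
proof (cases "s \<le> 1")
  case True
  have "(\<lambda>x. (x powr c * (x - s) powr g) * (1 - x) powr e) integrable_on {s..1}"
    by (intro integrable_continuous_mult_one_minus_powr continuous_on_powr' continuous_intros True)
       (use assms in auto)
  then show ?thesis by (simp add: mult_ac)
qed auto

lemma mult_less_one_unit_interval:
  fixes s u :: real
  assumes "0 \<le> s" "s < 1" "u \<le> 1"
  shows "s * u < 1"
  using mult_left_le[of u s] assms by linarith

lemma beta_left_rescaled:
  fixes c e g s :: real
  assumes c: "0 < c" and g: "0 < g" and s: "0 < s" "s < 1"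
  shows "beta_left c e g s = s powr (c + g + 1) * beta_left_scaled c e g s"
proof -
  define f where "f = (\<lambda>x. x powr c * (1 - x) powr e * (s - x) powr g)"
  have "continuous_on {0..s} f"
    unfolding f_def by (intro continuous_on_powr' continuous_intros) (use c g s in auto)
  then have "((\<lambda>u. s *\<^sub>R f (s * u)) has_integral integral {s * 0..s * 1} f) {0..1}"
    by (intro has_integral_substitution[where c=0 and d=s])
       (use s in \<open>auto intro!: derivative_eq_intros\<close>)
  then have sub: "((\<lambda>u. s *\<^sub>R f (s * u)) has_integral beta_left c e g s) {0..1}"
    unfolding beta_left_def f_def[symmetric] by simp
  have "s *\<^sub>R f (s * u) = s powr (c + g + 1) * (u powr c * (1 - s * u) powr e * (1 - u) powr g)"
    for u
  proof -
    have "s - s * u = s * (1 - u)" by (simp add: algebra_simps)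
    then have "(s - s * u) powr g = s powr g * (1 - u) powr g" "(s * u) powr c = s powr c * u powr c"
      by (simp_all add: powr_mult)
    moreover have "s powr (c + g + 1) = s powr c * s powr g * s"
      using s by (simp add: powr_add)
    ultimately show ?thesis
      unfolding f_def real_scaleR_def by (simp only: mult_ac)
  qed
  then have "((\<lambda>u. s powr (c + g + 1) * (u powr c * (1 - s * u) powr e * (1 - u) powr g))
      has_integral beta_left c e g s) {0..1}"
    using sub by simp
  then have "s powr (c + g + 1) * beta_left_scaled c e g s = beta_left c e g s"
    unfolding beta_left_scaled_def integral_mult_right[symmetric] by (rule integral_unique)
  then show ?thesis by simp
qed

lemma beta_right_rescaled:
  fixes c e g s :: real
  assumes e: "0 < e" and g: "0 < g" and s: "0 < s" "s < 1"
  shows "beta_right c e g s = (1 - s) powr (e + g + 1) * beta_right_scaled c e g s"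
proof -
  define f where "f = (\<lambda>x. x powr c * (1 - x) powr e * (x - s) powr g)"
  have "continuous_on {s..1} f"
    unfolding f_def by (intro continuous_on_powr' continuous_intros) (use e g s in auto)
  moreover have le1: "s + (1 - s) * u \<le> 1" if "0 \<le> u" "u \<le> 1" for u
  proof -
    have "(1 - s) * u \<le> 1 - s" using that s by (intro mult_left_le) auto
    then show ?thesis by linarith
  qed
  ultimately have "((\<lambda>u. (1 - s) *\<^sub>R f (s + (1 - s) * u)) has_integral
      integral {s + (1 - s) * 0..s + (1 - s) * 1} f) {0..1}"
    by (intro has_integral_substitution[where c=s and d=1])
       (use s in \<open>auto intro!: derivative_eq_intros intro: le1\<close>)
  then have sub: "((\<lambda>u. (1 - s) *\<^sub>R f (s + (1 - s) * u)) has_integral beta_right c e g s) {0..1}"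
    unfolding beta_right_def f_def[symmetric] by simp
  have "(1 - s) *\<^sub>R f (s + (1 - s) * u)
      = (1 - s) powr (e + g + 1) * ((s + (1 - s) * u) powr c * (1 - u) powr e * u powr g)" for u
  proof -
    have "1 - (s + (1 - s) * u) = (1 - s) * (1 - u)" "s + (1 - s) * u - s = (1 - s) * u"
      by (simp_all add: algebra_simps)
    then have "(1 - (s + (1 - s) * u)) powr e = (1 - s) powr e * (1 - u) powr e"
      "(s + (1 - s) * u - s) powr g = (1 - s) powr g * u powr g"
      by (simp_all add: powr_mult)
    moreover have "(1 - s) powr (e + g + 1) = (1 - s) powr e * (1 - s) powr g * (1 - s)"
      using s by (simp add: powr_add)
    ultimately show ?thesis
      unfolding f_def real_scaleR_def by (simp only: mult_ac)
  qed
  then have "((\<lambda>u. (1 - s) powr (e + g + 1) * ((s + (1 - s) * u) powr c * (1 - u) powr e * u powr g))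
      has_integral beta_right c e g s) {0..1}"
    using sub by simp
  then have "(1 - s) powr (e + g + 1) * beta_right_scaled c e g s = beta_right c e g s"
    unfolding beta_right_scaled_def integral_mult_right[symmetric] by (rule integral_unique)
  then show ?thesis by simp
qed

lemma beta_left_scaled_has_derivative:
  fixes c e g s0 :: real
  assumes c: "0 < c" and g: "0 < g" and s0: "0 < s0" "s0 < 1"
  shows "(beta_left_scaled c e g has_real_derivative
           - e * beta_left_scaled (c + 1) (e - 1) g s0) (at s0)"
proof -
  define F where "F s u = u powr c * (1 - s * u) powr e * (1 - u) powr g" for s u :: real
  define F' where "F' s u = - e * (u powr (c + 1) * (1 - s * u) powr (e - 1) * (1 - u) powr g)"
    for s u :: real
  have "((\<lambda>s. integral (cbox 0 1) (F s)) has_field_derivative integral (cbox 0 1) (F' s0))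
      (at s0 within {0<..<1})"
  proof (rule leibniz_rule_field_derivative)
    fix s u :: real
    assume s: "s \<in> {0<..<1}" and u: "u \<in> cbox 0 1"
    then have "s * u < 1" by (intro mult_less_one_unit_interval) auto
    then have "((\<lambda>s. F s u) has_real_derivative
        u powr c * (e * (1 - s * u) powr (e - 1) * (- u)) * (1 - u) powr g) (at s)"
      unfolding F_def by (auto intro!: derivative_eq_intros)
    moreover have "u powr c * (e * (1 - s * u) powr (e - 1) * (- u)) * (1 - u) powr g = F' s u"
      unfolding F'_def using powr_mult_base[of u c] u by (simp add: mult_ac add.commute)
    ultimately show "((\<lambda>s. F s u) has_field_derivative F' s u) (at s within {0<..<1})"
      by (simp add: has_field_derivative_at_within)
  next
    fix s :: real
    assume "s \<in> {0<..<1}"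
    then have "\<forall>u\<in>{0..1}. 0 < 1 - s * u"
      using mult_less_one_unit_interval[of s] by auto
    then have "continuous_on {0..1} (F s)"
      unfolding F_def by (intro continuous_on_powr' continuous_intros; use c g in force)
    then show "F s integrable_on cbox 0 1"
      by (simp add: integrable_continuous_interval)
  next
    have "\<forall>p\<in>{0<..<1::real} \<times> {0..1::real}. 0 < 1 - fst p * snd p"
      using mult_less_one_unit_interval by fastforce
    then show "continuous_on ({0<..<1} \<times> cbox 0 1) (\<lambda>(s, u). F' s u)"
      unfolding F'_def case_prod_unfold
      by (intro continuous_on_powr' continuous_intros; use c g in force)
  qed (use s0 in auto)
  then show ?thesis
    using at_within_open[of s0 "{0<..<1}"] s0
    unfolding beta_left_scaled_def F_def[abs_def] F'_def by simp
qed

lemma beta_right_scaled_has_derivative: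
  fixes c e g s0 :: real
  assumes e: "0 < e" and g: "0 < g" and s0: "0 < s0" "s0 < 1"
  shows "(beta_right_scaled c e g has_real_derivative
           c * beta_right_scaled (c - 1) (e + 1) g s0) (at s0)"
proof -
  have pos: "0 < s + (1 - s) * u" if "0 < s" "s < 1" "0 \<le> u" for s u :: real
    using that by (simp add: add_pos_nonneg)
  define F where "F s u = (s + (1 - s) * u) powr c * (1 - u) powr e * u powr g" for s u :: real
  define F' where "F' s u = c * ((s + (1 - s) * u) powr (c - 1) * (1 - u) powr (e + 1) * u powr g)"
    for s u :: real
  have "((\<lambda>s. integral (cbox 0 1) (F s)) has_field_derivative integral (cbox 0 1) (F' s0))
      (at s0 within {0<..<1})"
  proof (rule leibniz_rule_field_derivative)
    fix s u :: real
    assume s: "s \<in> {0<..<1}" and u: "u \<in> cbox 0 1"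
    then have "0 < s + (1 - s) * u" by (intro pos) auto
    then have "((\<lambda>s. F s u) has_real_derivative
        c * (s + (1 - s) * u) powr (c - 1) * (1 - u) * (1 - u) powr e * u powr g) (at s)"
      unfolding F_def by (auto intro!: derivative_eq_intros simp: algebra_simps)
    moreover have "c * (s + (1 - s) * u) powr (c - 1) * (1 - u) * (1 - u) powr e * u powr g = F' s u"
      unfolding F'_def using powr_mult_base[of "1 - u" e] u by (simp add: mult_ac add.commute)
    ultimately show "((\<lambda>s. F s u) has_field_derivative F' s u) (at s within {0<..<1})"
      by (simp add: has_field_derivative_at_within)
  next
    fix s :: real
    assume "s \<in> {0<..<1}"
    then have "\<forall>u\<in>{0..1}. 0 < s + (1 - s) * u"
      using pos by auto
    then have "continuous_on {0..1} (F s)"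
      unfolding F_def by (intro continuous_on_powr' continuous_intros; use e g in force)
    then show "F s integrable_on cbox 0 1"
      by (simp add: integrable_continuous_interval)
  next
    have "\<forall>p\<in>{0<..<1::real} \<times> {0..1::real}. 0 < fst p + (1 - fst p) * snd p"
      using pos by fastforce
    then show "continuous_on ({0<..<1} \<times> cbox 0 1) (\<lambda>(s, u). F' s u)"
      unfolding F'_def case_prod_unfold
      by (intro continuous_on_powr' continuous_intros; use e g in force)
  qed (use s0 in auto)
  then show ?thesis
    using at_within_open[of s0 "{0<..<1}"] s0
    unfolding beta_right_scaled_def F_def[abs_def] F'_def by simp
qed

lemma powr_shift_unit_interval:
  fixes x c e :: real
  assumes "0 \<le> x" "x \<le> 1"
  shows "x powr (c + 1) * (1 - x) powr e = x powr c * (1 - x) powr e - x powr c * (1 - x) powr (e + 1)"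
proof -
  have "x powr (c + 1) = x * x powr c" "(1 - x) powr (e + 1) = (1 - x) * (1 - x) powr e"
    using powr_mult_base[of x c] powr_mult_base[of "1 - x" e] assms by (simp_all add: add.commute)
  then show ?thesis by (simp only:) (simp add: algebra_simps)
qed

lemma beta_left_shift:
  fixes c e g s :: real
  assumes "0 < c" "0 < g" "s < 1"
  shows "beta_left (c + 1) e g s = beta_left c e g s - beta_left c (e + 1) g s"
proof -
  have "beta_left (c + 1) e g s = integral {0..s}
      (\<lambda>x. x powr c * (1 - x) powr e * (s - x) powr g - x powr c * (1 - x) powr (e + 1) * (s - x) powr g)"
    unfolding beta_left_def
  proof (rule integral_cong)
    fix x assume "x \<in> {0..s}"
    then have "x powr (c + 1) * (1 - x) powr e = x powr c * (1 - x) powr e - x powr c * (1 - x) powr (e + 1)"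
      using assms by (intro powr_shift_unit_interval) auto
    then show "x powr (c + 1) * (1 - x) powr e * (s - x) powr g
        = x powr c * (1 - x) powr e * (s - x) powr g - x powr c * (1 - x) powr (e + 1) * (s - x) powr g"
      by (simp add: left_diff_distrib)
  qed
  also have "\<dots> = beta_left c e g s - beta_left c (e + 1) g s"
    unfolding beta_left_def using assms by (intro integral_diff beta_left_integrable)
  finally show ?thesis .
qed

lemma beta_right_shift:
  fixes c e g s :: real
  assumes "-1 < e" "0 < g" "0 < s"
  shows "beta_right (c + 1) e g s = beta_right c e g s - beta_right c (e + 1) g s"
proof -
  have "beta_right (c + 1) e g s = integral {s..1}
      (\<lambda>x. x powr c * (1 - x) powr e * (x - s) powr g - x powr c * (1 - x) powr (e + 1) * (x - s) powr g)"
    unfolding beta_right_def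
  proof (rule integral_cong)
    fix x assume "x \<in> {s..1}"
    then have "x powr (c + 1) * (1 - x) powr e = x powr c * (1 - x) powr e - x powr c * (1 - x) powr (e + 1)"
      using assms by (intro powr_shift_unit_interval) auto
    then show "x powr (c + 1) * (1 - x) powr e * (x - s) powr g
        = x powr c * (1 - x) powr e * (x - s) powr g - x powr c * (1 - x) powr (e + 1) * (x - s) powr g"
      by (simp add: left_diff_distrib)
  qed
  also have "\<dots> = beta_right c e g s - beta_right c (e + 1) g s"
    unfolding beta_right_def using assms by (intro integral_diff beta_right_integrable) auto
  finally show ?thesis .
qed

text \<open>The boundary terms vanish because the antiderivative carries the factors
  \<open>(1 - x) powr b\<close> and \<open>(x - s) powr (g + 1)\<close>.\<close>

lemma beta_right_integration_by_parts:
  fixes c b g s :: real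
  assumes b: "0 < b" and g: "0 < g" and s: "0 < s" "s < 1"
  shows "c * s * beta_right (c - 1) b g s
    = (c + b + g + 1) * beta_right c b g s - b * (1 - s) * beta_right c (b - 1) g s"
proof -
  define F where "F x = x powr c * (1 - x) powr b * (x - s) powr g" for x
  define P where "P x = x powr (c - 1) * (1 - x) powr b * (x - s) powr g" for x
  define N where "N x = x powr c * (1 - x) powr (b - 1) * (x - s) powr g" for x
  define \<Phi> where "\<Phi> x = x powr c * (1 - x) powr b * (x - s) powr (g + 1)" for x
  define \<phi> where "\<phi> x = c * (F x - s * P x) - b * ((1 - s) * N x - F x) + (g + 1) * F x" for x
  have "(\<phi> has_integral (c * (integral {s..1} F - s * integral {s..1} P)
      - b * ((1 - s) * integral {s..1} N - integral {s..1} F) + (g + 1) * integral {s..1} F)) {s..1}"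
    unfolding \<phi>_def F_def P_def N_def using assms
    by (intro has_integral_add has_integral_diff has_integral_mult_right integrable_integral
          beta_right_integrable) auto
  moreover have "(\<phi> has_integral (\<Phi> 1 - \<Phi> s)) {s..1}"
  proof -
    have "continuous_on {s..1} \<Phi>"
      unfolding \<Phi>_def by (intro continuous_on_powr' continuous_intros; use s b g in force)
    moreover have "(\<Phi> has_vector_derivative \<phi> x) (at x)" if x: "x \<in> {s<..<1}" for x
    proof -
      have x0: "0 < x" "0 < 1 - x" "0 < x - s" using x s by auto
      have "x powr c = x powr (c - 1) * x" "(1 - x) powr b = (1 - x) powr (b - 1) * (1 - x)"
        "(x - s) powr (g + 1) = (x - s) powr g * (x - s)"
        using powr_mult_base[of x "c - 1"] powr_mult_base[of "1 - x" "b - 1"]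
          powr_mult_base[of "x - s" g] x0 by (simp_all add: mult.commute add.commute)
      then have "(c * x powr (c - 1) * (1 - x) powr b + b * (1 - x) powr (b - 1) * (- 1) * x powr c)
            * (x - s) powr (g + 1) + (g + 1) * (x - s) powr (g + 1 - 1) * (x powr c * (1 - x) powr b)
          = \<phi> x"
        unfolding \<phi>_def F_def P_def N_def by (simp only:) (simp add: algebra_simps)
      moreover have "(\<Phi> has_real_derivative
          (c * x powr (c - 1) * (1 - x) powr b + b * (1 - x) powr (b - 1) * (- 1) * x powr c)
            * (x - s) powr (g + 1)
          + (g + 1) * (x - s) powr (g + 1 - 1) * (x powr c * (1 - x) powr b)) (at x)"
        unfolding \<Phi>_def using x0 by (auto intro!: derivative_eq_intros)
      ultimately show ?thesis
        by (simp add: has_real_derivative_iff_has_vector_derivative)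
    qed
    ultimately show ?thesis
      using s by (intro fundamental_theorem_of_calculus_interior_strong[where S="{}"]) auto
  qed
  moreover have "\<Phi> 1 - \<Phi> s = 0"
    unfolding \<Phi>_def using b g by simp
  ultimately have "c * (integral {s..1} F - s * integral {s..1} P)
      - b * ((1 - s) * integral {s..1} N - integral {s..1} F) + (g + 1) * integral {s..1} F = 0"
    using has_integral_unique by metis
  then show ?thesis
    unfolding beta_right_def F_def[symmetric] P_def[symmetric] N_def[symmetric]
    by (simp add: algebra_simps)
qed

lemma beta_left_has_derivative:
  fixes c b g s0 :: real
  assumes c: "0 < c" and g: "0 < g" and s0: "0 < s0" "s0 < 1"
  shows "(beta_left c b g has_real_derivative
           ((c + b + g + 1) * beta_left c b g s0 - b * beta_left c (b - 1) g s0) / s0) (at s0)"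
proof -
  define p where "p = c + g + 1"
  define J where "J = beta_left_scaled c b g s0"
  define J' where "J' = beta_left_scaled (c + 1) (b - 1) g s0"
  define D where "D = p * s0 powr (p - 1) * J + (- b * J') * s0 powr p"
  have "((\<lambda>s. s powr p * beta_left_scaled c b g s) has_real_derivative D) (at s0)"
    unfolding D_def J_def J'_def
    by (rule DERIV_mult[OF has_real_derivative_powr beta_left_scaled_has_derivative])
       (use s0 c g in auto)
  then have deriv: "(beta_left c b g has_real_derivative D) (at s0)"
    by (rule has_field_derivative_transform_within_open[of _ _ _ "{0<..<1}"])
       (use s0 c g beta_left_rescaled in \<open>auto simp: p_def\<close>)
  define I where "I = beta_left c b g s0"
  define N where "N = beta_left c (b - 1) g s0"
  have I: "I = s0 powr p * J"
    unfolding I_def J_def p_def using c g s0 by (rule beta_left_rescaled)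
  have J': "s0 powr p * s0 * J' = N - I"
  proof -
    have "s0 powr (c + 1 + g + 1) = s0 powr (p + 1)" by (simp add: p_def add_ac)
    also have "\<dots> = s0 powr p * s0" using s0 by (simp add: powr_add)
    finally have "beta_left (c + 1) (b - 1) g s0 = s0 powr p * s0 * J'"
      using beta_left_rescaled[of "c + 1" g s0 "b - 1"] c g s0 unfolding J'_def by simp
    then show ?thesis
      using beta_left_shift[of c g s0 "b - 1"] c g s0 unfolding I_def N_def by simp
  qed
  have pow: "s0 * s0 powr (p - 1) = s0 powr p"
    using powr_mult_base[of s0 "p - 1"] s0 by simp
  have "s0 * D = p * (s0 * s0 powr (p - 1) * J) - b * (s0 powr p * s0 * J')"
    unfolding D_def by (simp add: algebra_simps)
  also have "\<dots> = p * I - b * (N - I)"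
    unfolding pow J' I ..
  finally have "D = ((c + b + g + 1) * I - b * N) / s0"
    using s0 unfolding p_def by (simp add: field_simps)
  then show ?thesis
    using deriv unfolding I_def N_def by simp
qed

lemma beta_right_has_derivative:
  fixes c b g s0 :: real
  assumes b: "0 < b" and g: "0 < g" and s0: "0 < s0" "s0 < 1"
  shows "(beta_right c b g has_real_derivative
           ((c + b + g + 1) * beta_right c b g s0 - b * beta_right c (b - 1) g s0) / s0) (at s0)"
proof -
  define q where "q = b + g + 1"
  define K where "K = beta_right_scaled c b g s0"
  define K' where "K' = beta_right_scaled (c - 1) (b + 1) g s0"
  define D where "D = q * (1 - s0) powr (q - 1) * (- 1) * K + c * K' * (1 - s0) powr q"
  have "((\<lambda>s. (1 - s) powr q) has_real_derivative q * (1 - s0) powr (q - 1) * (- 1)) (at s0)"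
    using s0 by (auto intro!: derivative_eq_intros)
  then have "((\<lambda>s. (1 - s) powr q * beta_right_scaled c b g s) has_real_derivative D) (at s0)"
    unfolding D_def K_def K'_def
    by (rule DERIV_mult[OF _ beta_right_scaled_has_derivative]) (use s0 b g in auto)
  then have deriv: "(beta_right c b g has_real_derivative D) (at s0)"
    by (rule has_field_derivative_transform_within_open[of _ _ _ "{0<..<1}"])
       (use s0 b g beta_right_rescaled in \<open>auto simp: q_def\<close>)
  define I where "I = beta_right c b g s0"
  define N where "N = beta_right c (b - 1) g s0"
  define P where "P = beta_right (c - 1) b g s0"
  have I: "I = (1 - s0) powr q * K"
    unfolding I_def K_def q_def using b g s0 by (rule beta_right_rescaled)
  have K': "(1 - s0) powr q * (1 - s0) * K' = P - I"
  proof -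
    have "(1 - s0) powr (b + 1 + g + 1) = (1 - s0) powr (q + 1)" by (simp add: q_def add_ac)
    also have "\<dots> = (1 - s0) powr q * (1 - s0)" using s0 by (simp add: powr_add)
    finally have "beta_right (c - 1) (b + 1) g s0 = (1 - s0) powr q * (1 - s0) * K'"
      using beta_right_rescaled[of "b + 1" g s0 "c - 1"] b g s0 unfolding K'_def by simp
    then show ?thesis
      using beta_right_shift[of b g s0 "c - 1"] b g s0 unfolding I_def P_def by simp
  qed
  have pow: "(1 - s0) * (1 - s0) powr (q - 1) = (1 - s0) powr q"
    using powr_mult_base[of "1 - s0" "q - 1"] s0 by simp
  have parts: "c * s0 * P = (c + b + g + 1) * I - b * (1 - s0) * N"
    unfolding I_def N_def P_def using b g s0 by (rule beta_right_integration_by_parts)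
  have "(1 - s0) * D = - q * ((1 - s0) * (1 - s0) powr (q - 1) * K) + c * ((1 - s0) powr q * (1 - s0) * K')"
    unfolding D_def by (simp add: algebra_simps)
  also have "\<dots> = - q * I + c * (P - I)"
    unfolding pow K' I ..
  finally have "s0 * (1 - s0) * D = s0 * (- q * I + c * (P - I))"
    by (simp add: mult.assoc)
  also have "\<dots> = - q * s0 * I + c * s0 * P - c * s0 * I"
    by (simp add: algebra_simps)
  also have "\<dots> = (1 - s0) * ((c + b + g + 1) * I - b * N)"
    unfolding parts q_def by (simp add: algebra_simps)
  finally have "(1 - s0) * (s0 * D) = (1 - s0) * ((c + b + g + 1) * I - b * N)"
    by (simp add: mult_ac)
  then have "s0 * D = (c + b + g + 1) * I - b * N"
    using s0 by simp
  then have "D = ((c + b + g + 1) * I - b * N) / s0"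
    using s0 by (simp add: field_simps)
  then show ?thesis
    using deriv unfolding I_def N_def by simp
qed

section \<open>Moments of the weight\<close>

lemma power_mult_powr: "0 \<le> (x::real) \<Longrightarrow> x ^ k * x powr a = x powr (real k + a)"
  by (cases "x = 0") (auto simp: powr_add powr_realpow)

lemma one_minus_powr_div: "(x::real) \<le> 1 \<Longrightarrow> (1 - x) powr e / (1 - x) = (1 - x) powr (e - 1)"
  by (cases "x = 1") (auto simp: powr_diff)

lemma wt_below:
  assumes "0 \<le> x" "x \<le> t"
  shows "x ^ k * wt a b g A B t x = A * (x powr (real k + a) * (1 - x) powr b * (t - x) powr g)"
proof -
  have "heaviside (x - t) = 0" "\<bar>x - t\<bar> = t - x"
    using assms by (auto simp: heaviside_def)
  then show ?thesis
    unfolding wt_def using power_mult_powr[of x k a] assms by (simp add: mult_ac)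
qed

lemma wt_above:
  assumes "0 \<le> t" "t \<le> x"
  shows "x ^ k * wt a b g A B t x = (A + B) * (x powr (real k + a) * (1 - x) powr b * (x - t) powr g)"
proof (cases "x = t")
  case False
  then have "heaviside (x - t) = 1" "\<bar>x - t\<bar> = x - t"
    using assms by (auto simp: heaviside_def)
  then show ?thesis
    unfolding wt_def using power_mult_powr[of x k a] assms by (simp add: mult_ac)
qed (simp add: wt_def)

lemma has_integral_split_at:
  fixes f F G :: "real \<Rightarrow> real"
  assumes t: "0 \<le> t" "t \<le> 1" and F: "F integrable_on {0..t}" and G: "G integrable_on {t..1}"
    and below: "\<And>x. x \<in> {0..t} \<Longrightarrow> f x = A * F x"
    and above: "\<And>x. x \<in> {t..1} \<Longrightarrow> f x = C * G x"
  shows "(f has_integral (A * integral {0..t} F + C * integral {t..1} G)) {0..1}"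
proof (rule has_integral_combine[OF t])
  show "(f has_integral A * integral {0..t} F) {0..t}"
    using below by (intro has_integral_eq[OF _ has_integral_mult_right[OF integrable_integral[OF F]]]) auto
  show "(f has_integral C * integral {t..1} G) {t..1}"
    using above by (intro has_integral_eq[OF _ has_integral_mult_right[OF integrable_integral[OF G]]]) auto
qed

lemma has_integral_moment_beta:
  assumes "0 < a" "0 < b" "0 < g" "0 < t" "t < 1"
  shows "((\<lambda>x. x ^ k * wt a b g A B t x) has_integral
           A * beta_left (real k + a) b g t + (A + B) * beta_right (real k + a) b g t) {0..1}"
  unfolding beta_left_def beta_right_def
  using assms
  by (intro has_integral_split_at beta_left_integrable beta_right_integrable wt_below wt_above) auto

definition moment_div :: "real \<Rightarrow> real \<Rightarrow> real \<Rightarrow> real \<Rightarrow> real \<Rightarrow> nat \<Rightarrow> real \<Rightarrow> real" where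
  "moment_div a b g A B k t = integral {0..1} (\<lambda>x. x ^ k * wt a b g A B t x / (1 - x))"

lemma has_integral_moment_div_beta:
  assumes "0 < a" "0 < b" "0 < g" "0 < t" "t < 1"
  shows "((\<lambda>x. x ^ k * wt a b g A B t x / (1 - x)) has_integral
      A * beta_left (real k + a) (b - 1) g t + (A + B) * beta_right (real k + a) (b - 1) g t) {0..1}"
  unfolding beta_left_def beta_right_def
proof (rule has_integral_split_at)
  fix x assume x: "x \<in> {0..t}"
  then have "(1 - x) powr b / (1 - x) = (1 - x) powr (b - 1)"
    using assms by (intro one_minus_powr_div) auto
  moreover have "x ^ k * wt a b g A B t x / (1 - x)
      = A * (x powr (real k + a) * ((1 - x) powr b / (1 - x)) * (t - x) powr g)"
    using x by (simp add: wt_below mult_ac)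
  ultimately show "x ^ k * wt a b g A B t x / (1 - x)
      = A * (x powr (real k + a) * (1 - x) powr (b - 1) * (t - x) powr g)"
    by simp
next
  fix x assume x: "x \<in> {t..1}"
  then have "(1 - x) powr b / (1 - x) = (1 - x) powr (b - 1)"
    using assms by (intro one_minus_powr_div) auto
  moreover have "x ^ k * wt a b g A B t x / (1 - x)
      = (A + B) * (x powr (real k + a) * ((1 - x) powr b / (1 - x)) * (x - t) powr g)"
    using x assms by (simp add: wt_above mult_ac)
  ultimately show "x ^ k * wt a b g A B t x / (1 - x)
      = (A + B) * (x powr (real k + a) * (1 - x) powr (b - 1) * (x - t) powr g)"
    by simp
qed (use assms in \<open>auto intro!: beta_left_integrable beta_right_integrable\<close>)

lemma moment_has_derivative:
  assumes a: "0 < a" and b: "0 < b" and g: "0 < g" and t: "0 < t" "t < 1"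
  shows "(moment a b g A B k has_real_derivative
     ((a + b + g + real k + 1) * moment a b g A B k t - b * moment_div a b g A B k t) / t) (at t)"
proof -
  define c where "c = real k + a"
  have "0 < c" unfolding c_def using a by simp
  then have deriv: "((\<lambda>s. A * beta_left c b g s + (A + B) * beta_right c b g s) has_real_derivative
      A * (((c + b + g + 1) * beta_left c b g t - b * beta_left c (b - 1) g t) / t)
      + (A + B) * (((c + b + g + 1) * beta_right c b g t - b * beta_right c (b - 1) g t) / t)) (at t)"
    using b g t by (intro DERIV_add DERIV_cmult beta_left_has_derivative beta_right_has_derivative)
  have moment_eq: "moment a b g A B k s = A * beta_left c b g s + (A + B) * beta_right c b g s"
    if "s \<in> {0<..<1}" for s
  proof -
    have "0 < s" "s < 1" using that by auto
    from has_integral_moment_beta[OF a b g this] show ?thesis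
      unfolding moment_def c_def by (rule integral_unique)
  qed
  have "(moment a b g A B k has_real_derivative
      A * (((c + b + g + 1) * beta_left c b g t - b * beta_left c (b - 1) g t) / t)
      + (A + B) * (((c + b + g + 1) * beta_right c b g t - b * beta_right c (b - 1) g t) / t)) (at t)"
    by (rule has_field_derivative_transform_within_open[OF deriv, of "{0<..<1}"]) (use t moment_eq in auto)
  moreover have "moment_div a b g A B k t = A * beta_left c (b - 1) g t + (A + B) * beta_right c (b - 1) g t"
    unfolding moment_div_def c_def using has_integral_moment_div_beta[OF a b g t] by (rule integral_unique)
  moreover have "moment a b g A B k t = A * beta_left c b g t + (A + B) * beta_right c b g t"
    unfolding moment_def c_def using has_integral_moment_beta[OF a b g t] by (rule integral_unique)
  moreover have "A * ((X * L - b * L') / t) + (A + B) * ((X * R - b * R') / t)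
      = (X * (A * L + (A + B) * R) - b * (A * L' + (A + B) * R')) / t" for X L L' R R' :: real
    using t by (simp add: field_simps)
  ultimately show ?thesis
    unfolding c_def by (simp add: add_ac)
qed

lemma has_integral_moment:
  assumes "0 < a" "0 < b" "0 < g" "0 < t" "t < 1"
  shows "((\<lambda>x. x ^ k * wt a b g A B t x) has_integral moment a b g A B k t) {0..1}"
  unfolding moment_def using has_integral_moment_beta[OF assms]
  by (blast intro: integrable_integral has_integral_integrable)

lemma has_integral_moment_div:
  assumes "0 < a" "0 < b" "0 < g" "0 < t" "t < 1"
  shows "((\<lambda>x. x ^ k * wt a b g A B t x / (1 - x)) has_integral moment_div a b g A B k t) {0..1}"
  unfolding moment_div_def using has_integral_moment_div_beta[OF assms]
  by (blast intro: integrable_integral has_integral_integrable)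

section \<open>Monic orthogonal polynomials and the Hankel determinant\<close>

lemma poly_eq_sum_lessThan:
  fixes p :: "'a::comm_semiring_1 poly"
  assumes "degree p < N"
  shows "poly p x = (\<Sum>i<N. coeff p i * x ^ i)"
proof -
  have "poly p x = (\<Sum>i\<le>degree p. coeff p i * x ^ i)" by (rule poly_altdef)
  also have "\<dots> = (\<Sum>i<N. coeff p i * x ^ i)"
    by (rule sum.mono_neutral_right[symmetric]) (use assms in \<open>auto simp: coeff_eq_0\<close>)
  finally show ?thesis .
qed

lemma integral_pos_if_pos_at:
  fixes f :: "real \<Rightarrow> real"
  assumes cont: "continuous_on {l..r} f" and nonneg: "\<And>x. x \<in> {l..r} \<Longrightarrow> 0 \<le> f x"
    and x0: "x0 \<in> {l<..<r}" "0 < f x0"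
  shows "0 < integral {l..r} f"
proof -
  have "l < r" using x0 by auto
  have "0 \<le> integral {l..r} f"
    by (rule integral_nonneg[OF integrable_continuous_interval[OF cont] nonneg])
  moreover have "integral {l..r} f \<noteq> 0"
    using integral_eq_0_iff[OF cont \<open>l < r\<close> nonneg] x0 by auto
  ultimately show ?thesis by linarith
qed

lemma poly_nonzero_in_interval:
  fixes p :: "real poly"
  assumes "p \<noteq> 0" "l < r"
  obtains x where "x \<in> {l<..<r}" "poly p x \<noteq> 0"
proof -
  have "infinite ({l<..<r} - {x. poly p x = 0})"
    using poly_roots_finite[OF assms(1)] assms(2) by (intro Diff_infinite_finite) auto
  then have "{l<..<r} - {x. poly p x = 0} \<noteq> {}"
    by (metis finite.emptyI)
  then show ?thesis using that by blast
qed

definition euler_op :: "'a::{comm_semiring_1,semiring_no_zero_divisors} poly \<Rightarrow> 'a poly" where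
  "euler_op p = pCons 0 (pderiv p)"

lemma coeff_euler_op: "coeff (euler_op p) k = of_nat k * coeff p k"
  by (cases k) (simp_all add: euler_op_def coeff_pderiv)

lemma degree_euler_op_le: "degree (euler_op p) \<le> degree p"
  by (rule degree_le) (auto simp: coeff_euler_op coeff_eq_0)

lemma euler_op_mult: "euler_op (p * q) = p * euler_op q + q * euler_op p"
  by (simp add: euler_op_def pderiv_mult)

locale jump_weight =
  fixes a b g A B :: real
  assumes a_pos: "0 < a" and b_pos: "0 < b" and g_pos: "0 < g"
    and A_nonneg: "0 \<le> A" and AB_nonneg: "0 \<le> A + B" and not_both_zero: "\<not> (A = 0 \<and> A + B = 0)"
begin

definition wint :: "real \<Rightarrow> real poly \<Rightarrow> real" where
  "wint t p = integral {0..1} (\<lambda>x. poly p x * wt a b g A B t x)"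

definition wint_div :: "real \<Rightarrow> real poly \<Rightarrow> real" where
  "wint_div t p = integral {0..1} (\<lambda>x. poly p x * wt a b g A B t x / (1 - x))"

lemma has_integral_wint_sum:
  assumes t: "0 < t" "t < 1" and N: "degree p < N"
  shows "((\<lambda>x. poly p x * wt a b g A B t x) has_integral
            (\<Sum>i<N. coeff p i * moment a b g A B i t)) {0..1}"
    and "((\<lambda>x. poly p x * wt a b g A B t x / (1 - x)) has_integral
            (\<Sum>i<N. coeff p i * moment_div a b g A B i t)) {0..1}"
proof -
  have "poly p x * wt a b g A B t x = (\<Sum>i<N. coeff p i * (x ^ i * wt a b g A B t x))" for x
    unfolding poly_eq_sum_lessThan[OF N] by (simp add: sum_distrib_right mult.assoc)
  note expand = this
  have expand_div: "poly p x * wt a b g A B t x / (1 - x)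
      = (\<Sum>i<N. coeff p i * (x ^ i * wt a b g A B t x / (1 - x)))" for x
    unfolding expand by (simp add: sum_divide_distrib)
  show "((\<lambda>x. poly p x * wt a b g A B t x) has_integral
            (\<Sum>i<N. coeff p i * moment a b g A B i t)) {0..1}"
    unfolding expand
    by (intro has_integral_sum has_integral_mult_right has_integral_moment a_pos b_pos g_pos t) auto
  show "((\<lambda>x. poly p x * wt a b g A B t x / (1 - x)) has_integral
            (\<Sum>i<N. coeff p i * moment_div a b g A B i t)) {0..1}"
    unfolding expand_div
    by (intro has_integral_sum has_integral_mult_right has_integral_moment_div a_pos b_pos g_pos t)
       auto
qed

lemma wint_eq_sum_moments:
  assumes "0 < t" "t < 1" "degree p < N"
  shows "wint t p = (\<Sum>i<N. coeff p i * moment a b g A B i t)"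
  unfolding wint_def using has_integral_wint_sum(1)[OF assms] by (rule integral_unique)

lemma wint_div_eq_sum_moment_div:
  assumes "0 < t" "t < 1" "degree p < N"
  shows "wint_div t p = (\<Sum>i<N. coeff p i * moment_div a b g A B i t)"
  unfolding wint_div_def using has_integral_wint_sum(2)[OF assms] by (rule integral_unique)

lemma wint_integrable:
  assumes "0 < t" "t < 1"
  shows "(\<lambda>x. poly p x * wt a b g A B t x) integrable_on {0..1}"
  using has_integral_wint_sum(1)[OF assms lessI] by blast

lemma wint_zero [simp]: "wint t 0 = 0"
  by (simp add: wint_def)

lemma wint_add: "0 < t \<Longrightarrow> t < 1 \<Longrightarrow> wint t (p + q) = wint t p + wint t q"
  unfolding wint_def by (simp add: distrib_right integral_add wint_integrable)

lemma wint_smult: "wint t (Polynomial.smult c p) = c * wint t p"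
  unfolding wint_def by (simp flip: integral_mult_right add: mult.assoc)

lemma wint_diff: "0 < t \<Longrightarrow> t < 1 \<Longrightarrow> wint t (p - q) = wint t p - wint t q"
  using wint_add[of t p "- q"] wint_smult[of t "- 1" q] by simp

lemma wint_sum: "0 < t \<Longrightarrow> t < 1 \<Longrightarrow> wint t (\<Sum>i\<in>I. f i) = (\<Sum>i\<in>I. wint t (f i))"
  by (induction I rule: infinite_finite_induct) (simp_all add: wint_add)


lemma wint_square_pos:
  assumes t: "0 < t" "t < 1" and p: "p \<noteq> 0"
  shows "0 < wint t (p * p)"
proof -
  define F where "F x = (poly p x)\<^sup>2 * (x powr a * (1 - x) powr b * (t - x) powr g)" for x
  define G where "G x = (poly p x)\<^sup>2 * (x powr a * (1 - x) powr b * (x - t) powr g)" for x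
  have F: "continuous_on {0..t} F" and G: "continuous_on {t..1} G"
    unfolding F_def G_def
    by (intro continuous_on_powr' continuous_intros; use t a_pos b_pos g_pos in force)+
  have "((\<lambda>x. poly (p * p) x * wt a b g A B t x) has_integral
      A * integral {0..t} F + (A + B) * integral {t..1} G) {0..1}"
  proof (rule has_integral_split_at)
    show "poly (p * p) x * wt a b g A B t x = A * F x" if "x \<in> {0..t}" for x
      using wt_below[of x t 0 a b g A B] that by (simp add: F_def power2_eq_square mult_ac)
    show "poly (p * p) x * wt a b g A B t x = (A + B) * G x" if "x \<in> {t..1}" for x
      using wt_above[of t x 0 a b g A B] that t by (simp add: G_def power2_eq_square mult_ac)
  qed (use t F G in \<open>auto intro: integrable_continuous_interval\<close>)
  then have "wint t (p * p) = A * integral {0..t} F + (A + B) * integral {t..1} G"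
    unfolding wint_def by (rule integral_unique)
  moreover have "0 < integral {0..t} F"
  proof -
    obtain x where "x \<in> {0<..<t}" "poly p x \<noteq> 0"
      using poly_nonzero_in_interval[OF p t(1)] .
    then show ?thesis
      using t by (intro integral_pos_if_pos_at[OF F, of x]) (auto simp: F_def)
  qed
  moreover have "0 < integral {t..1} G"
  proof -
    obtain x where "x \<in> {t<..<1}" "poly p x \<noteq> 0"
      using poly_nonzero_in_interval[OF p t(2)] .
    then show ?thesis
      using t by (intro integral_pos_if_pos_at[OF G, of x]) (auto simp: G_def)
  qed
  ultimately show ?thesis
    using A_nonneg AB_nonneg not_both_zero
    by (cases "A = 0") (simp_all add: add_pos_nonneg)
qed

definition orth_lower :: "real \<Rightarrow> nat \<Rightarrow> real poly \<Rightarrow> bool" where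
  "orth_lower t n p \<longleftrightarrow> (\<forall>r. degree r < n \<longrightarrow> wint t (p * r) = 0)"

lemma orth_lower_mult_eq_0:
  assumes "orth_lower t n p" "degree r \<le> n" "coeff r n = 0"
  shows "wint t (p * r) = 0"
proof (cases "r = 0")
  case False
  then have "degree r \<noteq> n" using assms(3) by auto
  then show ?thesis using assms(1,2) unfolding orth_lower_def by simp
qed simp

lemma orth_lower_iff_monomials:
  assumes t: "0 < t" "t < 1"
  shows "orth_lower t n p \<longleftrightarrow> (\<forall>m<n. wint t (p * monom 1 m) = 0)"
proof
  assume "orth_lower t n p"
  then show "\<forall>m<n. wint t (p * monom 1 m) = 0"
    unfolding orth_lower_def by (auto simp: degree_monom_eq)
next
  assume monomials: "\<forall>m<n. wint t (p * monom 1 m) = 0"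
  show "orth_lower t n p"
    unfolding orth_lower_def
  proof (intro allI impI)
    fix r :: "real poly"
    assume r: "degree r < n"
    have "p * r = (\<Sum>i\<le>degree r. Polynomial.smult (coeff r i) (p * monom 1 i))"
      by (subst (1) poly_as_sum_of_monoms[symmetric])
         (simp add: sum_distrib_left mult_smult_right smult_monom flip: mult_smult_right)
    then have "wint t (p * r) = (\<Sum>i\<le>degree r. coeff r i * wint t (p * monom 1 i))"
      using t by (simp add: wint_sum wint_smult)
    also have "\<dots> = 0"
      using monomials r by (auto intro!: sum.neutral)
    finally show "wint t (p * r) = 0" .
  qed
qed

lemma monic_orth_unique:
  assumes t: "0 < t" "t < 1"
    and p: "degree p = n" "coeff p n = 1" "orth_lower t n p"
    and q: "degree q = n" "coeff q n = 1" "orth_lower t n q"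
  shows "p = q"
proof (rule ccontr)
  assume "p \<noteq> q"
  define r where "r = p - q"
  have "r \<noteq> 0" "degree r \<le> n" "coeff r n = 0"
    unfolding r_def using \<open>p \<noteq> q\<close> p q by (auto intro: degree_diff_le)
  then have "wint t (p * r) = 0" "wint t (q * r) = 0"
    using p(3) q(3) by (auto intro: orth_lower_mult_eq_0)
  then have "wint t (r * r) = 0"
    unfolding r_def using t by (simp add: left_diff_distrib wint_diff)
  with wint_square_pos[OF t \<open>r \<noteq> 0\<close>] show False by simp
qed

lemma OP_eqI:
  assumes t: "0 < t" "t < 1" and p: "degree p = n" "coeff p n = 1" "orth_lower t n p"
  shows "OP a b g A B n t = p"
proof -
  have "integral {0..1} (\<lambda>x. poly q x * x ^ m * wt a b g A B t x) = wint t (q * monom 1 m)"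
    for q m
    unfolding wint_def by (simp add: poly_monom mult_ac)
  then have char: "(degree q = n \<and> lead_coeff q = 1 \<and>
      (\<forall>m<n. integral {0..1} (\<lambda>x. poly q x * x ^ m * wt a b g A B t x) = 0))
      \<longleftrightarrow> degree q = n \<and> coeff q n = 1 \<and> orth_lower t n q" for q
    using orth_lower_iff_monomials[OF t] by auto
  show ?thesis
    unfolding OP_def char
    by (rule the_equality) (use p monic_orth_unique[OF t] in blast)+
qed

lemma orth_lower_Suc_if_orth_monic_basis:
  assumes t: "0 < t" "t < 1"
    and basis: "\<And>i. i \<le> n \<Longrightarrow> degree (P i) = i \<and> coeff (P i) i = 1"
    and orth: "\<And>i. i \<le> n \<Longrightarrow> wint t (q * P i) = 0"
  shows "orth_lower t (Suc n) q"
  unfolding orth_lower_def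
proof (intro allI impI)
  fix r :: "real poly"
  assume "degree r < Suc n"
  then show "wint t (q * r) = 0"
  proof (induction "degree r" arbitrary: r rule: less_induct)
    case less
    show ?case
    proof (cases "r = 0")
      case False
      define d where "d = degree r"
      define r' where "r' = r - Polynomial.smult (lead_coeff r) (P d)"
      have d: "d \<le> n" "degree (P d) = d" "coeff (P d) d = 1"
        using basis[of d] less.prems unfolding d_def by auto
      have "degree r' \<le> d" "coeff r' d = 0"
        unfolding r'_def using d by (auto intro: degree_diff_le simp: d_def)
      then have "r' = 0 \<or> degree r' < d"
        by (metis le_neq_implies_less leading_coeff_0_iff)
      then have "wint t (q * r') = 0"
        using less d unfolding d_def by auto
      moreover have "q * r = q * r' + Polynomial.smult (lead_coeff r) (q * P d)"
        unfolding r'_def by (simp add: right_diff_distrib mult_smult_right)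
      ultimately show ?thesis
        using t orth d by (simp add: wint_add wint_smult)
    qed simp
  qed
qed


lemma orth_monic_pair_eq_0:
  assumes "degree p = i" "orth_lower t i p" "degree q = j" "orth_lower t j q" "i \<noteq> j"
  shows "wint t (p * q) = 0"
proof (cases "j < i")
  case True
  then show ?thesis using assms unfolding orth_lower_def by simp
next
  case False
  then have "i < j" using assms(5) by simp
  then show ?thesis using assms unfolding orth_lower_def by (simp add: mult.commute)
qed

text \<open>Gram--Schmidt: project \<open>x P\<^sub>n\<close> away from \<open>P\<^sub>0, \<dots>, P\<^sub>n\<close>.\<close>

lemma monic_orth_Suc_exists:
  assumes t: "0 < t" "t < 1"
    and P: "\<And>i. i \<le> n \<Longrightarrow> degree (P i) = i \<and> coeff (P i) i = 1 \<and> orth_lower t i (P i)"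
  obtains q where "degree q = Suc n" "coeff q (Suc n) = 1" "orth_lower t (Suc n) q"
proof
  define c where "c j = wint t (pCons 0 (P n) * P j) / wint t (P j * P j)" for j
  define S where "S = (\<Sum>j\<le>n. Polynomial.smult (c j) (P j))"
  define q where "q = pCons 0 (P n) - S"
  have "degree S \<le> n"
    unfolding S_def using P by (intro degree_sum_le) (auto intro: order.trans[OF degree_smult_le])
  then have "coeff S (Suc n) = 0" by (simp add: coeff_eq_0)
  then show q1: "coeff q (Suc n) = 1"
    unfolding q_def using P[of n] by simp
  have "degree (pCons 0 (P n)) \<le> Suc n"
    using P[of n] by (simp add: degree_pCons_le)
  then have "degree q \<le> Suc n"
    unfolding q_def using \<open>degree S \<le> n\<close> by (intro degree_diff_le) auto
  then show "degree q = Suc n"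
    using le_degree[of q "Suc n"] q1 by simp
  have norm: "0 < wint t (P i * P i)" if "i \<le> n" for i
    using P[OF that] by (intro wint_square_pos t) auto
  have "wint t (q * P i) = 0" if i: "i \<le> n" for i
  proof -
    have "wint t (S * P i) = (\<Sum>j\<le>n. c j * wint t (P j * P i))"
      unfolding S_def using t by (simp add: sum_distrib_right mult_smult_left wint_sum wint_smult)
    also have "\<dots> = c i * wint t (P i * P i) + (\<Sum>j\<in>{..n} - {i}. c j * wint t (P j * P i))"
      using i by (intro sum.remove) auto
    also have "(\<Sum>j\<in>{..n} - {i}. c j * wint t (P j * P i)) = 0"
      using P i by (intro sum.neutral ballI) (simp add: orth_monic_pair_eq_0)
    also have "c i * wint t (P i * P i) + 0 = wint t (pCons 0 (P n) * P i)"
      unfolding c_def using norm[OF i] by simp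
    finally show ?thesis
      unfolding q_def using t by (simp add: left_diff_distrib wint_diff)
  qed
  then show "orth_lower t (Suc n) q"
    using P by (intro orth_lower_Suc_if_orth_monic_basis t) auto
qed

lemma OP_monic_orth:
  assumes t: "0 < t" "t < 1"
  shows "degree (OP a b g A B n t) = n \<and> coeff (OP a b g A B n t) n = 1
    \<and> orth_lower t n (OP a b g A B n t)"
proof (induction n rule: less_induct)
  case (less n)
  show ?case
  proof (cases n)
    case 0
    have "OP a b g A B 0 t = 1"
      using t by (intro OP_eqI) (auto simp: orth_lower_def)
    then show ?thesis using 0 by (simp add: orth_lower_def)
  next
    case (Suc m)
    obtain q where "degree q = Suc m" "coeff q (Suc m) = 1" "orth_lower t (Suc m) q"
      using monic_orth_Suc_exists[OF t, of m "\<lambda>j. OP a b g A B j t"] less Suc by auto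
    moreover from this have "OP a b g A B (Suc m) t = q"
      using t by (intro OP_eqI) auto
    ultimately show ?thesis using Suc by simp
  qed
qed

lemma degree_OP: "0 < t \<Longrightarrow> t < 1 \<Longrightarrow> degree (OP a b g A B n t) = n"
  and coeff_OP: "0 < t \<Longrightarrow> t < 1 \<Longrightarrow> coeff (OP a b g A B n t) n = 1"
  and orth_lower_OP: "0 < t \<Longrightarrow> t < 1 \<Longrightarrow> orth_lower t n (OP a b g A B n t)"
  using OP_monic_orth by auto

lemma hn_eq_wint: "hn a b g A B n t = wint t (OP a b g A B n t * OP a b g A B n t)"
  unfolding hn_def wint_def by (simp add: power2_eq_square)

lemma hn_pos: "0 < t \<Longrightarrow> t < 1 \<Longrightarrow> 0 < hn a b g A B n t"
  unfolding hn_eq_wint using coeff_OP[of t n] by (intro wint_square_pos) auto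

lemma wint_OP_OP:
  assumes "0 < t" "t < 1"
  shows "wint t (OP a b g A B i t * OP a b g A B j t) = (if i = j then hn a b g A B i t else 0)"
  using assms by (auto simp: hn_eq_wint intro: orth_monic_pair_eq_0 degree_OP orth_lower_OP)

lemma wint_mult_eq_bilinear:
  assumes t: "0 < t" "t < 1" and p: "degree p < n" and q: "degree q < n"
  shows "wint t (p * q) = (\<Sum>l<n. (\<Sum>k<n. coeff p k * moment a b g A B (k + l) t) * coeff q l)"
proof -
  have "poly (p * q) x * wt a b g A B t x
      = (\<Sum>l<n. \<Sum>k<n. (coeff p k * coeff q l) * (x ^ (k + l) * wt a b g A B t x))" for x
    unfolding poly_mult poly_eq_sum_lessThan[OF p] poly_eq_sum_lessThan[OF q]
    by (simp add: sum_distrib_left sum_distrib_right power_add mult_ac)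
  then have "((\<lambda>x. poly (p * q) x * wt a b g A B t x) has_integral
      (\<Sum>l<n. \<Sum>k<n. (coeff p k * coeff q l) * moment a b g A B (k + l) t)) {0..1}"
    by (simp only:)
       (intro has_integral_sum has_integral_mult_right has_integral_moment a_pos b_pos g_pos t finite_lessThan)
  then show ?thesis
    unfolding wint_def by (simp add: integral_unique sum_distrib_left sum_distrib_right mult_ac)
qed


lemma Dn_eq_prod_hn:
  assumes t: "0 < t" "t < 1"
  shows "Dn a b g A B n t = (\<Prod>j<n. hn a b g A B j t)"
proof -
  define P where "P j = OP a b g A B j t" for j
  define M where "M = Matrix.mat n n (\<lambda>(i, j). moment a b g A B (i + j) t)"
  define C where "C = Matrix.mat n n (\<lambda>(i, j). coeff (P i) j)"
  define H where "H = Matrix.mat n n (\<lambda>(i, j). if i = j then hn a b g A B i t else 0)"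
  have carrier: "C \<in> carrier_mat n n" "M \<in> carrier_mat n n" "transpose_mat C \<in> carrier_mat n n"
    unfolding C_def M_def by auto
  have P: "degree (P i) = i" "coeff (P i) i = 1" for i
    unfolding P_def using degree_OP coeff_OP t by auto
  have factor: "C * M * transpose_mat C = H"
  proof (rule eq_matI)
    fix i j assume "i < dim_row H" "j < dim_col H"
    then have ij: "i < n" "j < n" unfolding H_def by auto
    have "(C * M * transpose_mat C) $$ (i, j)
        = (\<Sum>l<n. (\<Sum>k<n. coeff (P i) k * moment a b g A B (k + l) t) * coeff (P j) l)"
      using ij carrier unfolding C_def M_def by (simp add: scalar_prod_def atLeast0LessThan)
    also have "\<dots> = wint t (P i * P j)"
      using P ij by (intro wint_mult_eq_bilinear[symmetric] t) auto
    also have "\<dots> = H $$ (i, j)"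
      unfolding P_def H_def using wint_OP_OP[OF t] ij by simp
    finally show "(C * M * transpose_mat C) $$ (i, j) = H $$ (i, j)" .
  qed (auto simp: H_def C_def)
  have "det H = det C * det M * det (transpose_mat C)"
    unfolding factor[symmetric]
    by (simp add: det_mult[OF mult_carrier_mat[OF carrier(1,2)] carrier(3)] det_mult[OF carrier(1,2)])
  moreover have "det C = 1"
  proof -
    have "det C = prod_list (diag_mat C)"
      by (rule det_lower_triangular[OF _ carrier(1)]) (auto simp: C_def coeff_eq_0 P)
    then show ?thesis unfolding prod_list_diag_prod C_def using P by simp
  qed
  moreover have "det H = (\<Prod>j<n. hn a b g A B j t)"
  proof -
    have "det H = prod_list (diag_mat H)"
      by (rule det_upper_triangular) (auto simp: H_def upper_triangular_def)
    then show ?thesis unfolding prod_list_diag_prod H_def by (simp add: atLeast0LessThan)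
  qed
  moreover have "Dn a b g A B n t = det M"
    unfolding Dn_def Determinant.det_def M_def
    by (auto simp: atLeast0LessThan permutes_in_image intro!: sum.cong prod.cong)
  ultimately show ?thesis
    using det_transpose[OF carrier(1)] by simp
qed

section \<open>Dependence on \<open>t\<close>\<close>

lemma wint_has_derivative:
  assumes t: "0 < t" "t < 1"
  shows "((\<lambda>s. wint s p) has_real_derivative
     ((a + b + g + 1) * wint t p + wint t (euler_op p) - b * wint_div t p) / t) (at t)"
proof -
  define N where "N = Suc (degree p)"
  have N: "degree p < N" "degree (euler_op p) < N"
    unfolding N_def using degree_euler_op_le[of p] by auto
  define m' where "m' k = ((a + b + g + real k + 1) * moment a b g A B k t
    - b * moment_div a b g A B k t) / t" for k
  have "((\<lambda>s. \<Sum>k<N. coeff p k * moment a b g A B k s) has_real_derivative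
      (\<Sum>k<N. coeff p k * m' k)) (at t)"
    unfolding m'_def using a_pos b_pos g_pos t
    by (intro DERIV_sum DERIV_cmult moment_has_derivative)
  then have "((\<lambda>s. wint s p) has_real_derivative (\<Sum>k<N. coeff p k * m' k)) (at t)"
    by (rule has_field_derivative_transform_within_open[of _ _ _ "{0<..<1}"])
       (use t wint_eq_sum_moments[OF _ _ N(1)] in auto)
  moreover have "(\<Sum>k<N. coeff p k * m' k) = (\<Sum>k<N. ((a + b + g + 1) * (coeff p k * moment a b g A B k t)
      + (of_nat k * coeff p k) * moment a b g A B k t - b * (coeff p k * moment_div a b g A B k t)) / t)"
    unfolding m'_def by (intro sum.cong refl) (simp add: field_simps)
  also have "\<dots> = ((a + b + g + 1) * (\<Sum>k<N. coeff p k * moment a b g A B k t)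
      + (\<Sum>k<N. (of_nat k * coeff p k) * moment a b g A B k t)
      - b * (\<Sum>k<N. coeff p k * moment_div a b g A B k t)) / t"
    by (simp add: sum_divide_distrib[symmetric] sum.distrib sum_subtractf sum_distrib_left)
  ultimately show ?thesis
    using wint_eq_sum_moments[OF t N(1)] wint_eq_sum_moments[OF t N(2)]
      wint_div_eq_sum_moment_div[OF t N(1)]
    by (simp add: coeff_euler_op)
qed

lemma Dn_differentiable:
  assumes t: "0 < t" "t < 1"
  shows "Dn a b g A B n field_differentiable (at t)"
proof -
  have moment': "(moment a b g A B k has_real_derivative
      ((a + b + g + real k + 1) * moment a b g A B k t - b * moment_div a b g A B k t) / t) (at t)"
    for k using a_pos b_pos g_pos t by (rule moment_has_derivative)
  have "((\<lambda>s. \<Sum>p | p permutes {..<n}. of_int (sign p) * (\<Prod>i<n. moment a b g A B (i + p i) s))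
      has_real_derivative (\<Sum>p | p permutes {..<n}. of_int (sign p) *
        (\<Sum>i<n. ((a + b + g + real (i + p i) + 1) * moment a b g A B (i + p i) t
           - b * moment_div a b g A B (i + p i) t) / t
         * (\<Prod>j\<in>{..<n} - {i}. moment a b g A B (j + p j) t)))) (at t)"
    by (intro DERIV_sum DERIV_cmult has_field_derivative_prod moment')
  then show ?thesis
    unfolding Dn_def[abs_def] field_differentiable_def by blast
qed

lemma Dn_pos: "0 < t \<Longrightarrow> t < 1 \<Longrightarrow> 0 < Dn a b g A B n t"
  unfolding Dn_eq_prod_hn by (intro prod_pos hn_pos) auto

lemma hn_differentiable:
  assumes t: "0 < t" "t < 1"
  shows "hn a b g A B n field_differentiable (at t)"
proof -
  have "(\<lambda>s. Dn a b g A B (Suc n) s / Dn a b g A B n s) field_differentiable (at t)"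
    using Dn_differentiable[OF t] Dn_pos[OF t]
    by (intro field_differentiable_divide) (auto simp: less_imp_neq[symmetric])
  then obtain D where D: "((\<lambda>s. Dn a b g A B (Suc n) s / Dn a b g A B n s) has_real_derivative D) (at t)"
    unfolding field_differentiable_def by blast
  have quotient: "Dn a b g A B (Suc n) s / Dn a b g A B n s = hn a b g A B n s" if "s \<in> {0<..<1}" for s
  proof -
    have s: "0 < s" "s < 1" using that by auto
    then have "Dn a b g A B (Suc n) s = Dn a b g A B n s * hn a b g A B n s"
      by (simp add: Dn_eq_prod_hn)
    then show ?thesis using Dn_pos[OF s, of n] by (auto simp: field_simps)
  qed
  have "(hn a b g A B n has_real_derivative D) (at t)"
    by (rule has_field_derivative_transform_within_open[OF D, of "{0<..<1}"]) (use t quotient in auto)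
  then show ?thesis
    unfolding field_differentiable_def by blast
qed


lemma hn_le_wint_monic_square:
  assumes t: "0 < t" "t < 1" and Q: "degree Q = n" "coeff Q n = 1"
  shows "hn a b g A B n t \<le> wint t (Q * Q)"
proof -
  define P where "P = OP a b g A B n t"
  define r where "r = Q - P"
  have "degree r \<le> n" "coeff r n = 0"
    unfolding r_def P_def using Q degree_OP[OF t] coeff_OP[OF t] by (auto intro: degree_diff_le)
  then have "wint t (P * r) = 0"
    unfolding P_def using orth_lower_OP[OF t] by (rule orth_lower_mult_eq_0[rotated])
  moreover have "0 \<le> wint t (r * r)"
    using wint_square_pos[OF t, of r] by (cases "r = 0") auto
  moreover have "Q * Q = P * P + (P * r + P * r) + r * r"
    unfolding r_def by (simp add: algebra_simps)
  then have "wint t (Q * Q) = wint t (P * P) + (wint t (P * r) + wint t (P * r)) + wint t (r * r)"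
    by (simp only: wint_add[OF t])
  ultimately show ?thesis
    unfolding hn_eq_wint P_def[symmetric] by simp
qed

lemma wint_euler_op_OP_square:
  fixes n :: nat
  assumes t: "0 < t" "t < 1"
  defines "P \<equiv> OP a b g A B n t"
  shows "wint t (euler_op (P * P)) = 2 * real n * hn a b g A B n t"
proof -
  define r where "r = euler_op P - Polynomial.smult (real n) P"
  have "degree r \<le> n" "coeff r n = 0"
    unfolding r_def P_def using degree_euler_op_le[of "OP a b g A B n t"] degree_OP[OF t] coeff_OP[OF t]
    by (auto intro: degree_diff_le simp: coeff_euler_op)
  then have "wint t (P * r) = 0"
    unfolding P_def using orth_lower_OP[OF t] by (rule orth_lower_mult_eq_0[rotated])
  moreover have "P * euler_op P = Polynomial.smult (real n) (P * P) + P * r"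
    unfolding r_def by (simp add: algebra_simps mult_smult_right)
  then have "wint t (P * euler_op P) = real n * wint t (P * P) + wint t (P * r)"
    by (simp only: wint_add[OF t] wint_smult)
  moreover have "wint t (euler_op (P * P)) = wint t (P * euler_op P) + wint t (P * euler_op P)"
    unfolding euler_op_mult by (rule wint_add[OF t])
  ultimately show ?thesis
    unfolding hn_eq_wint P_def[symmetric] by simp
qed

text \<open>\<open>h\<^sub>n(s) \<le> \<integral> Q\<^sup>2 w(\<cdot>, s)\<close> with equality at \<open>s = t\<close> for \<open>Q = P\<^sub>n(\<cdot>, t)\<close>, so
  the two sides have the same derivative at \<open>t\<close>: the \<open>t\<close>-dependence of \<open>P\<^sub>n\<close> drops out.\<close>

lemma hn_has_derivative:
  assumes t: "0 < t" "t < 1"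
  shows "(hn a b g A B n has_real_derivative
     hn a b g A B n t * (a + b + g + 2 * real n + 1 - Rn a b g A B n t) / t) (at t)"
proof -
  define Q where "Q = OP a b g A B n t"
  obtain D where D: "(hn a b g A B n has_real_derivative D) (at t)"
    using hn_differentiable[OF t] unfolding field_differentiable_def by blast
  define D' where "D' = ((a + b + g + 1) * wint t (Q * Q) + wint t (euler_op (Q * Q))
    - b * wint_div t (Q * Q)) / t"
  have D': "((\<lambda>s. wint s (Q * Q)) has_real_derivative D') (at t)"
    unfolding D'_def by (rule wint_has_derivative[OF t])
  have "D - D' = 0"
  proof (rule DERIV_local_max[OF DERIV_diff[OF D D']])
    show "0 < min t (1 - t)" using t by simp
    show "\<forall>s. \<bar>t - s\<bar> < min t (1 - t) \<longrightarrow>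
        hn a b g A B n s - wint s (Q * Q) \<le> hn a b g A B n t - wint t (Q * Q)"
    proof (intro allI impI)
      fix s
      assume "\<bar>t - s\<bar> < min t (1 - t)"
      then have "0 < s" "s < 1" by auto
      then have "hn a b g A B n s \<le> wint s (Q * Q)"
        by (rule hn_le_wint_monic_square) (simp_all add: Q_def degree_OP[OF t] coeff_OP[OF t])
      moreover have "hn a b g A B n t = wint t (Q * Q)"
        unfolding Q_def by (rule hn_eq_wint)
      ultimately show "hn a b g A B n s - wint s (Q * Q) \<le> hn a b g A B n t - wint t (Q * Q)"
        by simp
    qed
  qed
  moreover have "wint_div t (Q * Q) = hn a b g A B n t * Rn a b g A B n t / b"
    unfolding Rn_def wint_div_def Q_def using hn_pos[OF t, of n] b_pos by (simp add: power2_eq_square)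
  ultimately have "D = ((a + b + g + 1) * hn a b g A B n t + 2 * real n * hn a b g A B n t
      - hn a b g A B n t * Rn a b g A B n t) / t"
    unfolding D'_def Q_def wint_euler_op_OP_square[OF t] hn_eq_wint[symmetric] using b_pos by simp
  then show ?thesis
    using D by (simp add: algebra_simps)
qed

lemma ln_hn_has_derivative:
  assumes "0 < t" "t < 1"
  shows "((\<lambda>s. ln (hn a b g A B n s)) has_real_derivative
     (a + b + g + 2 * real n + 1 - Rn a b g A B n t) / t) (at t)"
proof -
  have "0 < hn a b g A B n t" using hn_pos[OF assms] .
  from DERIV_chain2[OF DERIV_ln_divide[OF this] hn_has_derivative[OF assms]] this show ?thesis
    by simp
qed

lemma betan_has_derivative:
  assumes t: "0 < t" "t < 1" and n: "1 \<le> n"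
  shows "(betan a b g A B n has_real_derivative
     betan a b g A B n t * (2 - Rn a b g A B n t + Rn a b g A B (n - 1) t) / t) (at t)"
proof -
  have "(betan a b g A B n has_real_derivative
      ((hn a b g A B n t * (a + b + g + 2 * real n + 1 - Rn a b g A B n t) / t) * hn a b g A B (n - 1) t
      - hn a b g A B n t * (hn a b g A B (n - 1) t * (a + b + g + 2 * real (n - 1) + 1
          - Rn a b g A B (n - 1) t) / t))
      / (hn a b g A B (n - 1) t * hn a b g A B (n - 1) t)) (at t)"
    unfolding betan_def[abs_def]
    by (rule DERIV_divide[OF hn_has_derivative[OF t] hn_has_derivative[OF t]])
       (use hn_pos[OF t] in \<open>simp add: less_imp_neq[symmetric]\<close>)
  moreover have "(hn a b g A B n t * (a + b + g + 2 * real n + 1 - Rn a b g A B n t) / t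
        * hn a b g A B (n - 1) t
      - hn a b g A B n t * (hn a b g A B (n - 1) t * (a + b + g + 2 * real (n - 1) + 1
          - Rn a b g A B (n - 1) t) / t))
      / (hn a b g A B (n - 1) t * hn a b g A B (n - 1) t)
    = betan a b g A B n t * (2 - Rn a b g A B n t + Rn a b g A B (n - 1) t) / t"
  proof -
    have n1: "real (n - 1) = real n - 1" using n by simp
    show ?thesis
      unfolding betan_def n1 using t hn_pos[OF t, of "n - 1"] by (simp add: field_simps)
  qed
  ultimately show ?thesis by simp
qed

lemma ln_Dn_has_derivative:
  assumes t: "0 < t" "t < 1"
  shows "((\<lambda>s. ln (Dn a b g A B n s)) has_real_derivative
     (real n * (real n + a + b + g) - (\<Sum>j<n. Rn a b g A B j t)) / t) (at t)"
proof -
  have sum_deriv: "((\<lambda>s. \<Sum>j<n. ln (hn a b g A B j s)) has_real_derivative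
      (\<Sum>j<n. (a + b + g + 2 * real j + 1 - Rn a b g A B j t) / t)) (at t)"
    by (intro DERIV_sum ln_hn_has_derivative t)
  have ln_Dn: "(\<Sum>j<n. ln (hn a b g A B j s)) = ln (Dn a b g A B n s)" if "s \<in> {0<..<1}" for s
    using that by (simp add: Dn_eq_prod_hn hn_pos ln_prod less_imp_neq[symmetric])
  have "(\<Sum>j<n. 2 * real j + 1) = real n * real n"
    by (induction n) (auto simp: algebra_simps)
  then have "(\<Sum>j<n. (a + b + g + 2 * real j + 1 - Rn a b g A B j t) / t)
      = (real n * (real n + a + b + g) - (\<Sum>j<n. Rn a b g A B j t)) / t"
    by (simp add: sum_divide_distrib[symmetric] sum_subtractf sum.distrib algebra_simps)
  moreover have "((\<lambda>s. ln (Dn a b g A B n s)) has_real_derivative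
      (\<Sum>j<n. (a + b + g + 2 * real j + 1 - Rn a b g A B j t) / t)) (at t)"
    by (rule has_field_derivative_transform_within_open[OF sum_deriv, of "{0<..<1}"])
       (use t ln_Dn in auto)
  ultimately show ?thesis by simp
qed

end

lemma has_real_derivative_imp_deriv:
  "(f has_real_derivative D) (at x) \<Longrightarrow> f differentiable (at x) \<and> deriv f x = D"
  using DERIV_deriv_iff_real_differentiable DERIV_imp_deriv by metis

theorem mainTheorem6:
  fixes a b g A B t :: real and n :: nat
  assumes "a > 0" "b > 0" "g > 0"
    and "A \<ge> 0" "A + B \<ge> 0" "\<not> (A = 0 \<and> A + B = 0)"
    and "0 < t" "t < 1"
  shows "((\<lambda>s. ln (hn a b g A B n s)) differentiable (at t) \<and>
         t * deriv (\<lambda>s. ln (hn a b g A B n s)) t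
           = a + b + g + 2 * real n + 1 - Rn a b g A B n t) \<and>
         (n \<ge> 1 \<longrightarrow> (\<lambda>s. betan a b g A B n s) differentiable (at t) \<and>
         t * deriv (\<lambda>s. betan a b g A B n s) t
           = betan a b g A B n t * (2 - Rn a b g A B n t + Rn a b g A B (n - 1) t)) \<and>
         ((\<lambda>s. ln (Dn a b g A B n s)) differentiable (at t) \<and>
         t * (t - 1) * deriv (\<lambda>s. ln (Dn a b g A B n s)) t
           = real n * (real n + a + b + g) * (t - 1) - (t - 1) * (\<Sum>j<n. Rn a b g A B j t))"
proof -
  interpret jump_weight a b g A B
    using assms by unfold_locales auto
  have t: "0 < t" "t < 1" using assms by auto
  have cancel: "t * (X / t) = X" "t * (t - 1) * (X / t) = (t - 1) * X" for X
    using t by simp_all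
  have "(\<lambda>s. ln (hn a b g A B n s)) differentiable (at t) \<and>
      t * deriv (\<lambda>s. ln (hn a b g A B n s)) t = a + b + g + 2 * real n + 1 - Rn a b g A B n t"
    using has_real_derivative_imp_deriv[OF ln_hn_has_derivative[OF t]] by (simp only: cancel)
  moreover have "betan a b g A B n differentiable (at t) \<and> t * deriv (betan a b g A B n) t
      = betan a b g A B n t * (2 - Rn a b g A B n t + Rn a b g A B (n - 1) t)" if "1 \<le> n"
    using has_real_derivative_imp_deriv[OF betan_has_derivative[OF t that]] by (simp only: cancel)
  moreover have "(\<lambda>s. ln (Dn a b g A B n s)) differentiable (at t) \<and>
      t * (t - 1) * deriv (\<lambda>s. ln (Dn a b g A B n s)) t
        = real n * (real n + a + b + g) * (t - 1) - (t - 1) * (\<Sum>j<n. Rn a b g A B j t)"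
    using has_real_derivative_imp_deriv[OF ln_Dn_has_derivative[OF t]]
    by (simp only: cancel) (simp add: algebra_simps)
  ultimately show ?thesis by blast
qed

end
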